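(* Let $(\mathbb P_\alpha)$ be a tight family of measures in $\mathfrak M_{fin}(\mathfrak M_{fin}((0,+\infty)))$, each supported on the set $\mathfrak s\Omega_P$. Then the family $(\mathfrak p\mathbb P_\alpha)$ of measures on $\Omega_P$ is also tight.
   Context: For a metric space $X$, $\mathfrak M_{fin}(X)$ denotes the space of finite Borel measures on $X$ with the weak topology (convergence of integrals of bounded continuous functions). The Pickrell set is $$\Omega_P=\Big\{\omega=(\gamma,x):\ \gamma\in\mathbb R,\ x=(x_1,x_2,\dots),\ x_1\ge x_2\ge\dots\ge0,\ \sum_{i}x_i\le\gamma\Big\},$$ with the topology induced from the product topology on $\mathbb R\times\mathbb R^{\mathbb N}$; write $\gamma(\omega)=\gamma$, $x_i(\omega)=x_i$. Let $\Omega_P^0=\{\omega\in\Omega_P:\gamma(\omega)=\sum_i x_i(\omega)\}$. Define $\mathfrak s:\Omega_P\to\mathfrak M_{fin}((0,+\infty))$ by $\mathfrak s(\omega)=\sum_{i:\,x_i(\omega)>0}\min(x_i(\omega),1)\,\delta_{x_i(\omega)}$. The map $\mathfrak s$ is injective on $\Omega_P^0$ and $\mathfrak s(\Omega_P^0)=\mathfrak s\Omega_P$. For a finite Borel measure $\mathbb P$ on $\mathfrak M_{fin}((0,+\infty))$ supported on $\mathfrak s\Omega_P$ (i.e. giving zero mass to its complement), $\mathfrak p\mathbb P$ denotes the unique Borel measure on $\Omega_P$ with $\mathfrak s_*\mathfrak p\mathbb P=\mathbb P$ and $\mathfrak p\mathbb P(\Omega_P\setminus\Omega_P^0)=0$.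 *)

theory Defs
  imports "HOL-Probability.Probability"
begin

definition borel_of :: "'a topology \<Rightarrow> 'a measure" where
  "borel_of T = sigma (topspace T) {U. openin T U}"

definition pos_borel :: "real measure" where
  "pos_borel = restrict_space borel {0<..}"

definition Mfin_pos :: "real measure set" where
  "Mfin_pos = {M. sets M = sets pos_borel \<and> finite_measure M}"

definition weak_top :: "real measure topology" where
  "weak_top = subtopology
     (topology_generated_by
        {{M \<in> Mfin_pos. (\<integral>x. f x \<partial>M) \<in> U} | f U.
           continuous_on {0<..} f \<and> bounded (f ` {0<..}) \<and> open (U :: real set)})
     Mfin_pos"

definition Omega_P :: "(real \<times> (nat \<Rightarrow> real)) set" where
  "Omega_P = {(\<gamma>, x). (\<forall>i. x i \<ge> x (Suc i)) \<and> (\<forall>i. x i \<ge> 0) \<and>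
                       summable x \<and> (\<Sum>i. x i) \<le> \<gamma>}"

definition Omega_P0 :: "(real \<times> (nat \<Rightarrow> real)) set" where
  "Omega_P0 = {\<omega> \<in> Omega_P. fst \<omega> = (\<Sum>i. snd \<omega> i)}"

definition frak_s :: "real \<times> (nat \<Rightarrow> real) \<Rightarrow> real measure" where
  "frak_s \<omega> = measure_of (space pos_borel) (sets pos_borel)
     (\<lambda>A. \<Sum>i. (if snd \<omega> i > 0 then ennreal (min (snd \<omega> i) 1) else 0)
                * indicator A (snd \<omega> i))"

definition tight_family :: "'a topology \<Rightarrow> 'i set \<Rightarrow> ('i \<Rightarrow> 'a measure) \<Rightarrow> bool" where
  "tight_family T I P \<longleftrightarrow>
     (\<forall>\<epsilon>>0. \<exists>K. compactin T K \<and>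
        (\<forall>\<alpha>\<in>I. topspace T - K \<in> sets (P \<alpha>) \<and> emeasure (P \<alpha>) (topspace T - K) < ennreal \<epsilon>))"

end

theory Submission
  imports Defs
begin

text \<open>Integrating a bounded continuous \<open>f\<close> against \<open>frak_s \<omega>\<close> gives the series
  \<open>\<Sum>i. min x\<^sub>i 1 * f x\<^sub>i\<close>; on \<open>Omega_P0\<close> its tail after \<open>N\<close> terms is bounded by a multiple
  of \<open>\<gamma> - (\<Sum>i<N. x\<^sub>i)\<close>, which is continuous in \<open>\<omega>\<close>, so \<open>frak_s\<close> is continuous on \<open>Omega_P0\<close>
  and, composed with the Borel retraction \<open>\<omega> \<mapsto> (\<Sum>i. x\<^sub>i, x)\<close>, Borel on \<open>Omega_P\<close>.
  A weakly compact set \<open>K\<close> of measures is covered by finitely many weakly open sets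
  "mass \<open>< n\<close> and mass beyond \<open>n\<close> small", which forces \<open>\<gamma> \<le> (n + 1) n\<close> on
  \<open>Omega_P0 \<inter> frak_s -` K\<close>, while the sublevel sets \<open>{\<gamma> \<le> C}\<close> of \<open>Omega_P\<close> are compact.
  As each \<open>Q \<alpha>\<close> lives on \<open>Omega_P0\<close>, its mass outside \<open>{\<gamma> \<le> C}\<close> is at most the
  mass of \<open>P \<alpha>\<close> outside \<open>K\<close>.\<close>

definition s_weight :: "real \<times> (nat \<Rightarrow> real) \<Rightarrow> nat \<Rightarrow> real" where
  "s_weight \<omega> i = (if snd \<omega> i > 0 then min (snd \<omega> i) 1 else 0)"

text \<open>A vanishing coordinate gets weight 0; its atom is moved to the arbitrary point 1
  only to stay inside \<open>(0,+\<infinity>)\<close>.\<close>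
definition s_atom :: "real \<times> (nat \<Rightarrow> real) \<Rightarrow> nat \<Rightarrow> real" where
  "s_atom \<omega> i = (if snd \<omega> i > 0 then snd \<omega> i else 1)"

definition damp :: "(real \<Rightarrow> real) \<Rightarrow> real \<Rightarrow> real" where
  "damp f t = (if t > 0 then min t 1 * f t else 0)"

lemma s_weight_nonneg: "s_weight \<omega> i \<ge> 0"
  by (simp add: s_weight_def)

lemma space_pos_borel [simp]: "space pos_borel = {0<..}"
  by (simp add: pos_borel_def)

lemma s_atom_measurable:
  "s_atom \<omega> \<in> measurable (density (count_space UNIV) (\<lambda>i. ennreal (s_weight \<omega> i))) pos_borel"
  by (auto simp: s_atom_def)

lemma emeasure_s_distr:
  assumes "A \<in> sets pos_borel"
  shows "emeasure (distr (density (count_space UNIV) (\<lambda>i. ennreal (s_weight \<omega> i))) pos_borel (s_atom \<omega>)) A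
    = (\<Sum>i. ennreal (s_weight \<omega> i) * indicator A (s_atom \<omega> i))"
proof -
  have "emeasure (distr (density (count_space UNIV) (\<lambda>i. ennreal (s_weight \<omega> i))) pos_borel (s_atom \<omega>)) A
      = (\<integral>\<^sup>+ i. ennreal (s_weight \<omega> i) * indicator (s_atom \<omega> -` A) i \<partial>count_space UNIV)"
    using assms s_atom_measurable by (simp add: emeasure_distr emeasure_density)
  also have "\<dots> = (\<Sum>i. ennreal (s_weight \<omega> i) * indicator A (s_atom \<omega> i))"
    by (subst nn_integral_count_space_nat) (simp add: indicator_def)
  finally show ?thesis .
qed

lemma frak_s_eq_distr:
  "frak_s \<omega> = distr (density (count_space UNIV) (\<lambda>i. ennreal (s_weight \<omega> i))) pos_borel (s_atom \<omega>)"
    (is "_ = ?N")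
proof -
  have "frak_s \<omega> = measure_of (space pos_borel) (sets pos_borel) (emeasure ?N)"
    unfolding frak_s_def
  proof (rule measure_of_eq[OF sets.space_closed])
    fix A assume "A \<in> sigma_sets (space pos_borel) (sets pos_borel)"
    then have A: "A \<in> sets pos_borel" by (metis sets.sigma_sets_eq)
    show "(\<Sum>i. (if snd \<omega> i > 0 then ennreal (min (snd \<omega> i) 1) else 0) * indicator A (snd \<omega> i))
        = emeasure ?N A"
      unfolding emeasure_s_distr[OF A] by (intro suminf_cong) (simp add: s_weight_def s_atom_def)
  qed
  also have "\<dots> = ?N"
    using measure_of_of_measure[of ?N] by simp
  finally show ?thesis .
qed

lemma Omega_P0_subset: "Omega_P0 \<subseteq> Omega_P"
  by (auto simp: Omega_P0_def)

lemma summable_s_weight: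
  assumes "\<omega> \<in> Omega_P"
  shows "summable (s_weight \<omega>)"
proof (rule summable_comparison_test')
  show "summable (snd \<omega>)" using assms by (auto simp: Omega_P_def)
  have "snd \<omega> i \<ge> 0" for i using assms by (auto simp: Omega_P_def)
  then show "norm (s_weight \<omega> i) \<le> snd \<omega> i" for i
    by (simp add: s_weight_def)
qed

lemma frak_s_in_Mfin_pos:
  assumes "\<omega> \<in> Omega_P"
  shows "frak_s \<omega> \<in> Mfin_pos"
proof -
  have "emeasure (frak_s \<omega>) (space (frak_s \<omega>)) = (\<Sum>i. ennreal (s_weight \<omega> i))"
    unfolding frak_s_eq_distr space_distr using emeasure_s_distr[OF sets.top, of \<omega>]
    by (simp add: s_atom_def)
  also have "\<dots> = ennreal (\<Sum>i. s_weight \<omega> i)"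
    using summable_s_weight[OF assms] by (intro suminf_ennreal2 s_weight_nonneg)
  finally have "finite_measure (frak_s \<omega>)"
    by (intro finite_measureI) simp
  then show ?thesis
    by (simp add: Mfin_pos_def frak_s_eq_distr)
qed

lemma damp_bound:
  assumes "\<And>t. t > 0 \<Longrightarrow> \<bar>f t\<bar> \<le> B" and "t \<ge> 0"
  shows "\<bar>damp f t\<bar> \<le> \<bar>B\<bar> * t"
proof (cases "t > 0")
  case True
  then have "\<bar>damp f t\<bar> \<le> t * \<bar>B\<bar>"
    using assms(1)[OF True] by (auto simp: damp_def abs_mult intro!: mult_mono)
  then show ?thesis by (simp add: mult.commute)
qed (use assms in \<open>simp add: damp_def\<close>)

lemma
  assumes \<omega>: "\<omega> \<in> Omega_P" and f: "f \<in> borel_measurable pos_borel"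
    and bound: "\<And>t. t > 0 \<Longrightarrow> \<bar>f t\<bar> \<le> B"
  shows summable_damp: "summable (\<lambda>i. damp f (snd \<omega> i))"
    and integral_frak_s: "(\<integral>t. f t \<partial>frak_s \<omega>) = (\<Sum>i. damp f (snd \<omega> i))"
proof -
  have damp_eq: "s_weight \<omega> i * f (s_atom \<omega> i) = damp f (snd \<omega> i)" for i
    by (simp add: s_weight_def s_atom_def damp_def)
  have "summable (\<lambda>i. \<bar>B\<bar> * snd \<omega> i)"
    using \<omega> by (intro summable_mult) (auto simp: Omega_P_def)
  then have abs_summable: "summable (\<lambda>i. norm (damp f (snd \<omega> i)))"
    by (rule summable_comparison_test')
       (use \<omega> damp_bound[OF bound] in \<open>auto simp: Omega_P_def\<close>)
  then show "summable (\<lambda>i. damp f (snd \<omega> i))"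
    by (rule summable_norm_cancel)
  have "(\<integral>t. f t \<partial>frak_s \<omega>)
      = (\<integral>i. f (s_atom \<omega> i) \<partial>density (count_space UNIV) (\<lambda>i. ennreal (s_weight \<omega> i)))"
    unfolding frak_s_eq_distr by (rule integral_distr[OF s_atom_measurable f])
  also have "\<dots> = (\<integral>i. s_weight \<omega> i * f (s_atom \<omega> i) \<partial>count_space UNIV)"
    by (subst integral_density) (auto simp: s_weight_nonneg)
  also have "\<dots> = (\<Sum>i. damp f (snd \<omega> i))"
    using abs_summable
    by (subst integral_count_space_nat) (auto simp: integrable_count_space_nat_iff damp_eq)
  finally show "(\<integral>t. f t \<partial>frak_s \<omega>) = (\<Sum>i. damp f (snd \<omega> i))" .
qed

lemma continuous_on_damp:
  assumes f: "continuous_on {0<..} f" and bound: "\<And>t. t > 0 \<Longrightarrow> \<bar>f t\<bar> \<le> B"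
  shows "continuous_on {0..} (damp f)"
  unfolding continuous_on_eq_continuous_within
proof
  fix t :: real assume "t \<in> {0..}"
  then consider "t > 0" | "t = 0" by fastforce
  then show "continuous (at t within {0..}) (damp f)"
  proof cases
    case 1
    have "continuous_on {0<..} (\<lambda>s. min s 1 * f s)"
      by (intro continuous_intros f)
    then have "isCont (\<lambda>s. min s 1 * f s) t"
      using 1 by (simp add: continuous_on_eq_continuous_at)
    moreover have "eventually (\<lambda>s. damp f s = min s 1 * f s) (nhds t)"
      using 1 by (intro eventually_nhds_in_open[of "{0<..}", THEN eventually_mono]) (auto simp: damp_def)
    ultimately have "isCont (damp f) t"
      using isCont_cong[of "damp f" "\<lambda>s. min s 1 * f s" t] by simp
    then show ?thesis
      by (rule continuous_at_imp_continuous_at_within)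
  next
    case 2
    have "(damp f \<longlongrightarrow> 0) (at 0 within {0..})"
    proof (rule Lim_null_comparison)
      show "eventually (\<lambda>s. norm (damp f s) \<le> \<bar>B\<bar> * s) (at 0 within {0..})"
        by (auto simp: eventually_at_filter intro!: always_eventually damp_bound[OF bound])
      show "((\<lambda>s. \<bar>B\<bar> * s) \<longlongrightarrow> 0) (at 0 within {0..})"
        by (intro tendsto_eq_intros) auto
    qed
    then show ?thesis using 2 by (simp add: continuous_within damp_def)
  qed
qed

lemma suminf_tail_bound:
  fixes a x :: "nat \<Rightarrow> real"
  assumes x: "summable x" and bound: "\<And>i. \<bar>a i\<bar> \<le> B * x i"
  shows "\<bar>(\<Sum>i. a i) - (\<Sum>i<N. a i)\<bar> \<le> B * ((\<Sum>i. x i) - (\<Sum>i<N. x i))"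
proof -
  have Bx: "summable (\<lambda>i. B * x i)" using x by (rule summable_mult)
  have abs_a: "summable (\<lambda>i. \<bar>a i\<bar>)"
    by (rule summable_comparison_test'[OF Bx]) (use bound in auto)
  then have a: "summable a" by (rule summable_rabs_cancel)
  have "\<bar>(\<Sum>i. a i) - (\<Sum>i<N. a i)\<bar> = \<bar>\<Sum>i. a (i + N)\<bar>"
    using suminf_split_initial_segment[OF a, of N] by simp
  also have "\<dots> \<le> (\<Sum>i. \<bar>a (i + N)\<bar>)"
    using summable_ignore_initial_segment[OF abs_a] by (rule summable_rabs)
  also have "\<dots> \<le> (\<Sum>i. B * x (i + N))"
    by (rule suminf_le[OF bound summable_ignore_initial_segment summable_ignore_initial_segment])
       (use abs_a Bx in auto)
  also have "\<dots> = B * ((\<Sum>i. x i) - (\<Sum>i<N. x i))"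
    using suminf_mult[OF summable_ignore_initial_segment[OF x]] suminf_split_initial_segment[OF x, of N]
    by simp
  finally show ?thesis .
qed

lemma continuous_within_by_approx:
  fixes g :: "'a::t2_space \<Rightarrow> real"
  assumes "x \<in> S"
    and "\<And>N. continuous_on S (G N)"
    and "\<And>N. continuous_on S (T N)"
    and approx: "\<And>N y. y \<in> S \<Longrightarrow> \<bar>g y - G N y\<bar> \<le> T N y"
    and lim: "(\<lambda>N. T N x) \<longlonglongrightarrow> 0"
  shows "continuous (at x within S) g"
  unfolding continuous_within
proof (rule tendstoI)
  fix e :: real assume "e > 0"
  then have "eventually (\<lambda>N. T N x < e / 4) sequentially"
    using lim by (intro order_tendstoD(2)) auto
  then obtain N where N: "T N x < e / 4"
    using eventually_sequentially by auto
  have G: "(G N \<longlongrightarrow> G N x) (at x within S)" and T: "(T N \<longlongrightarrow> T N x) (at x within S)"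
    using assms(1-3) by (auto simp: continuous_on_eq_continuous_within continuous_within)
  have "eventually (\<lambda>y. dist (G N y) (G N x) < e / 4) (at x within S)"
    using G \<open>e > 0\<close> by (intro tendstoD) auto
  moreover have "eventually (\<lambda>y. T N y < T N x + e / 4) (at x within S)"
    using T \<open>e > 0\<close> by (intro order_tendstoD(2)) auto
  moreover have "eventually (\<lambda>y. y \<in> S) (at x within S)"
    by (simp add: eventually_at_filter)
  ultimately show "eventually (\<lambda>y. dist (g y) (g x) < e) (at x within S)"
  proof eventually_elim
    case (elim y)
    then show ?case
      using approx[of y N] approx[OF \<open>x \<in> S\<close>, of N] N
      unfolding dist_real_def abs_le_iff abs_less_iff by linarith
  qed
qed

lemma continuous_on_coordinate: "continuous_on S (\<lambda>\<omega>::real \<times> (nat \<Rightarrow> real). snd \<omega> i)"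
  by (rule continuous_on_product_then_coordinatewise) (intro continuous_intros)

text \<open>On \<open>Omega_P0\<close> the tail \<open>\<Sum>i\<ge>N. x\<^sub>i\<close> equals the continuous function
  \<open>\<gamma> - (\<Sum>i<N. x\<^sub>i)\<close>; this replaces the missing uniform convergence.\<close>
lemma continuous_on_suminf_Omega_P0:
  assumes h: "continuous_on {0..} h" and bound: "\<And>t. t \<ge> 0 \<Longrightarrow> \<bar>h t\<bar> \<le> B * t"
  shows "continuous_on Omega_P0 (\<lambda>\<omega>. \<Sum>i. h (snd \<omega> i))"
  unfolding continuous_on_eq_continuous_within
proof
  fix \<omega>0 assume \<omega>0: "\<omega>0 \<in> Omega_P0"
  have P0: "summable (snd \<omega>) \<and> (\<forall>i. snd \<omega> i \<ge> 0) \<and> fst \<omega> = (\<Sum>i. snd \<omega> i)"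
    if "\<omega> \<in> Omega_P0" for \<omega>
    using that by (auto simp: Omega_P0_def Omega_P_def)
  have partial_sums: "continuous_on Omega_P0 (\<lambda>\<omega>. \<Sum>i<N. h (snd \<omega> i))" for N :: nat
    by (intro continuous_on_sum continuous_on_compose2[OF h continuous_on_coordinate])
       (use P0 in auto)
  have remainder: "continuous_on Omega_P0 (\<lambda>\<omega>. B * (fst \<omega> - (\<Sum>i<N. snd \<omega> i)))" for N :: nat
    by (intro continuous_intros continuous_on_coordinate)
  have "(\<lambda>N. \<Sum>i<N. snd \<omega>0 i) \<longlonglongrightarrow> fst \<omega>0"
    using P0[OF \<omega>0] summable_LIMSEQ by metis
  then have "(\<lambda>N. B * (fst \<omega>0 - (\<Sum>i<N. snd \<omega>0 i))) \<longlonglongrightarrow> 0"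
    using tendsto_diff[OF tendsto_const[of "fst \<omega>0"]] by (intro tendsto_mult_right_zero) force
  then show "continuous (at \<omega>0 within Omega_P0) (\<lambda>\<omega>. \<Sum>i. h (snd \<omega> i))"
  proof (rule continuous_within_by_approx[OF \<omega>0 partial_sums remainder, rotated])
    show "\<bar>(\<Sum>i. h (snd \<omega> i)) - (\<Sum>i<N. h (snd \<omega> i))\<bar> \<le> B * (fst \<omega> - (\<Sum>i<N. snd \<omega> i))"
      if "\<omega> \<in> Omega_P0" for \<omega> N
      using suminf_tail_bound[of "snd \<omega>" "\<lambda>i. h (snd \<omega> i)" B N] P0[OF that] bound by auto
  qed
qed

definition weak_subbasis :: "real measure set set" where
  "weak_subbasis = {{M \<in> Mfin_pos. (\<integral>x. f x \<partial>M) \<in> U} | f U.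
     continuous_on {0<..} f \<and> bounded (f ` {0<..}) \<and> open (U :: real set)}"

lemma weak_top_eq: "weak_top = subtopology (topology_generated_by weak_subbasis) Mfin_pos"
  by (simp add: weak_top_def weak_subbasis_def)

lemma integral_in_weak_subbasis:
  fixes f :: "real \<Rightarrow> real"
  assumes "continuous_on {0<..} f" and "bounded (f ` {0<..})" and "open U"
  shows "{M \<in> Mfin_pos. (\<integral>x. f x \<partial>M) \<in> U} \<in> weak_subbasis"
  using assms unfolding weak_subbasis_def by blast

lemma Mfin_pos_in_weak_subbasis: "Mfin_pos \<in> weak_subbasis"
proof -
  have "bounded ((\<lambda>_::real. 0::real) ` {0<..})"
    by (auto simp: bounded_real)
  then show ?thesis
    using integral_in_weak_subbasis[of "\<lambda>_. 0" UNIV] by simp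
qed

lemma topspace_weak_top: "topspace weak_top = Mfin_pos"
proof -
  have "\<Union>weak_subbasis \<subseteq> Mfin_pos"
    by (auto simp: weak_subbasis_def)
  then have "\<Union>weak_subbasis = Mfin_pos"
    using Mfin_pos_in_weak_subbasis by blast
  then show ?thesis
    by (simp add: weak_top_eq)
qed

lemma continuous_map_frak_s: "continuous_map (top_of_set Omega_P0) weak_top frak_s"
  unfolding weak_top_eq
proof (rule continuous_map_into_subtopology)
  have frak_s_Mfin: "frak_s \<omega> \<in> Mfin_pos" if "\<omega> \<in> Omega_P0" for \<omega>
    using that Omega_P0_subset frak_s_in_Mfin_pos by blast
  then show "frak_s \<in> topspace (top_of_set Omega_P0) \<rightarrow> Mfin_pos"
    by simp
  show "continuous_map (top_of_set Omega_P0) (topology_generated_by weak_subbasis) frak_s"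
  proof (rule continuous_on_generated_topo)
    show "frak_s ` topspace (top_of_set Omega_P0) \<subseteq> \<Union>weak_subbasis"
      using frak_s_Mfin Mfin_pos_in_weak_subbasis by auto
    fix V assume "V \<in> weak_subbasis"
    then obtain f :: "real \<Rightarrow> real" and U where V: "V = {M \<in> Mfin_pos. (\<integral>x. f x \<partial>M) \<in> U}"
      and f: "continuous_on {0<..} f" "bounded (f ` {0<..})" and U: "open U"
      unfolding weak_subbasis_def by blast
    obtain B where bound: "\<And>t. t > 0 \<Longrightarrow> \<bar>f t\<bar> \<le> B"
      using f(2) unfolding bounded_real by auto
    have "f \<in> borel_measurable pos_borel"
      unfolding pos_borel_def by (rule borel_measurable_continuous_on_restrict[OF f(1)])
    then have "(\<integral>x. f x \<partial>frak_s \<omega>) = (\<Sum>i. damp f (snd \<omega> i))" if "\<omega> \<in> Omega_P0" for \<omega>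
      using that Omega_P0_subset integral_frak_s bound by blast
    then have "frak_s -` V \<inter> topspace (top_of_set Omega_P0) = Omega_P0 \<inter> (\<lambda>\<omega>. \<Sum>i. damp f (snd \<omega> i)) -` U"
      unfolding V using frak_s_Mfin by auto
    moreover have "continuous_on Omega_P0 (\<lambda>\<omega>. \<Sum>i. damp f (snd \<omega> i))"
      using continuous_on_damp[OF f(1) bound] damp_bound[OF bound] by (rule continuous_on_suminf_Omega_P0)
    ultimately show "openin (top_of_set Omega_P0) (frak_s -` V \<inter> topspace (top_of_set Omega_P0))"
      using U by (simp add: continuous_openin_preimage_gen)
  qed
qed

definition gamma_reset :: "real \<times> (nat \<Rightarrow> real) \<Rightarrow> real \<times> (nat \<Rightarrow> real)" where
  "gamma_reset \<omega> = ((\<Sum>i. snd \<omega> i), snd \<omega>)"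

lemma gamma_reset_measurable: "gamma_reset \<in> borel_measurable borel"
proof -
  have "(\<lambda>\<omega>::real \<times> (nat \<Rightarrow> real). snd \<omega> i) \<in> borel_measurable borel" for i
    by (rule borel_measurable_continuous_onI[OF continuous_on_coordinate])
  then have "(\<lambda>\<omega>::real \<times> (nat \<Rightarrow> real). \<Sum>i. snd \<omega> i) \<in> borel_measurable borel"
    by (rule borel_measurable_suminf)
  moreover have "(snd :: real \<times> (nat \<Rightarrow> real) \<Rightarrow> _) \<in> borel_measurable borel"
    by (intro borel_measurable_continuous_onI continuous_intros)
  ultimately have "gamma_reset \<in> measurable borel (borel \<Otimes>\<^sub>M borel)"
    unfolding gamma_reset_def by (rule measurable_Pair)
  then show ?thesis
    by (simp only: borel_prod)
qed

lemma gamma_reset_in_Omega_P0: "\<omega> \<in> Omega_P \<Longrightarrow> gamma_reset \<omega> \<in> Omega_P0"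
  by (auto simp: gamma_reset_def Omega_P0_def Omega_P_def)

lemma frak_s_gamma_reset: "frak_s (gamma_reset \<omega>) = frak_s \<omega>"
  unfolding frak_s_def gamma_reset_def snd_conv by (rule refl)

lemma Omega_P0_sets: "Omega_P0 \<in> sets (restrict_space borel Omega_P)"
proof -
  have fst: "(fst :: real \<times> (nat \<Rightarrow> real) \<Rightarrow> real) \<in> borel_measurable borel"
    by (intro borel_measurable_continuous_onI continuous_intros)
  have "{\<omega> \<in> space borel. fst \<omega> = fst (gamma_reset \<omega>)} \<in> sets borel"
    using fst measurable_compose[OF gamma_reset_measurable fst] by (rule measurable_equality_set)
  moreover have "Omega_P0 = Omega_P \<inter> {\<omega> \<in> space borel. fst \<omega> = fst (gamma_reset \<omega>)}"
    by (auto simp: Omega_P0_def gamma_reset_def)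
  ultimately show ?thesis
    unfolding sets_restrict_space by blast
qed

text \<open>Since \<open>frak_s\<close> factors through the Borel retraction \<open>gamma_reset\<close> onto \<open>Omega_P0\<close>,
  on which it is continuous, it is Borel on all of \<open>Omega_P\<close>.\<close>
lemma frak_s_measurable: "frak_s \<in> measurable (restrict_space borel Omega_P) (borel_of weak_top)"
  unfolding borel_of_def
proof (rule measurable_measure_of)
  show "{U. openin weak_top U} \<subseteq> Pow (topspace weak_top)"
    using openin_subset by auto
  show "frak_s \<in> space (restrict_space borel Omega_P) \<rightarrow> topspace weak_top"
    using frak_s_in_Mfin_pos by (auto simp: topspace_weak_top space_restrict_space)
  fix U assume "U \<in> {U. openin weak_top U}"
  then have "openin (top_of_set Omega_P0) {\<omega> \<in> Omega_P0. frak_s \<omega> \<in> U}"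
    using openin_continuous_map_preimage[OF continuous_map_frak_s] by simp
  then obtain T where "open T" and T: "{\<omega> \<in> Omega_P0. frak_s \<omega> \<in> U} = Omega_P0 \<inter> T"
    unfolding openin_open by auto
  have "frak_s \<omega> \<in> U \<longleftrightarrow> gamma_reset \<omega> \<in> T" if "\<omega> \<in> Omega_P" for \<omega>
  proof -
    have "frak_s \<omega> \<in> U \<longleftrightarrow> gamma_reset \<omega> \<in> {\<omega> \<in> Omega_P0. frak_s \<omega> \<in> U}"
      using gamma_reset_in_Omega_P0[OF that] by (simp add: frak_s_gamma_reset)
    then show ?thesis
      unfolding T using gamma_reset_in_Omega_P0[OF that] by simp
  qed
  then have "frak_s -` U \<inter> space (restrict_space borel Omega_P) = Omega_P \<inter> (gamma_reset -` T \<inter> space borel)"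
    by (auto simp: space_restrict_space)
  moreover have "gamma_reset -` T \<inter> space borel \<in> sets borel"
    using \<open>open T\<close> by (intro measurable_sets[OF gamma_reset_measurable]) simp
  ultimately show "frak_s -` U \<inter> space (restrict_space borel Omega_P) \<in> sets (restrict_space borel Omega_P)"
    unfolding sets_restrict_space by blast
qed

lemma Omega_P_sublevel_eq:
  "{\<omega> \<in> Omega_P. fst \<omega> \<le> C} =
     {\<omega>. (\<forall>i. snd \<omega> (Suc i) \<le> snd \<omega> i) \<and> (\<forall>i. 0 \<le> snd \<omega> i)
        \<and> (\<forall>n. (\<Sum>i<n. snd \<omega> i) \<le> fst \<omega>) \<and> fst \<omega> \<le> C}"
proof (intro set_eqI iffI)
  fix \<omega> assume "\<omega> \<in> {\<omega> \<in> Omega_P. fst \<omega> \<le> C}"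
  then have "\<forall>i. snd \<omega> (Suc i) \<le> snd \<omega> i" "\<forall>i. 0 \<le> snd \<omega> i" "summable (snd \<omega>)"
      "(\<Sum>i. snd \<omega> i) \<le> fst \<omega>" "fst \<omega> \<le> C"
    by (auto simp: Omega_P_def)
  moreover have "(\<Sum>i<n. snd \<omega> i) \<le> fst \<omega>" for n
    using sum_le_suminf[OF \<open>summable (snd \<omega>)\<close>, of "{..<n}"] calculation by auto
  ultimately show "\<omega> \<in> {\<omega>. (\<forall>i. snd \<omega> (Suc i) \<le> snd \<omega> i) \<and> (\<forall>i. 0 \<le> snd \<omega> i)
      \<and> (\<forall>n. (\<Sum>i<n. snd \<omega> i) \<le> fst \<omega>) \<and> fst \<omega> \<le> C}"
    by auto
next
  fix \<omega> assume "\<omega> \<in> {\<omega>. (\<forall>i. snd \<omega> (Suc i) \<le> snd \<omega> i) \<and> (\<forall>i. 0 \<le> snd \<omega> i)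
      \<and> (\<forall>n. (\<Sum>i<n. snd \<omega> i) \<le> fst \<omega>) \<and> fst \<omega> \<le> C}"
  then have \<omega>: "\<forall>i. snd \<omega> (Suc i) \<le> snd \<omega> i" "\<forall>i. 0 \<le> snd \<omega> i"
      "\<And>n. (\<Sum>i<n. snd \<omega> i) \<le> fst \<omega>" "fst \<omega> \<le> C"
    by auto
  have "summable (snd \<omega>)"
    by (rule summableI_nonneg_bounded[of _ "fst \<omega>"]) (use \<omega> in auto)
  moreover have "(\<Sum>i. snd \<omega> i) \<le> fst \<omega>"
    by (rule suminf_le_const[OF calculation \<omega>(3)])
  ultimately show "\<omega> \<in> {\<omega> \<in> Omega_P. fst \<omega> \<le> C}"
    using \<omega> by (cases \<omega>) (auto simp: Omega_P_def)
qed

lemma compact_Omega_P_sublevel: "compact {\<omega> \<in> Omega_P. fst \<omega> \<le> C}"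
proof -
  have closed: "closed {\<omega> \<in> Omega_P. fst \<omega> \<le> C}"
    unfolding Omega_P_sublevel_eq
    by (intro closed_Collect_conj closed_Collect_all closed_Collect_le continuous_intros
        continuous_on_coordinate)
  have box: "compact ({0..C} \<times> ((UNIV :: nat set) \<rightarrow>\<^sub>E {0..C}))"
    using compactin_PiE[of "\<lambda>_::nat. euclidean" UNIV "\<lambda>_. {0..C}"]
    by (intro compact_Times) (auto simp: euclidean_product_topology)
  have sub: "{\<omega> \<in> Omega_P. fst \<omega> \<le> C} \<subseteq> {0..C} \<times> (UNIV \<rightarrow>\<^sub>E {0..C})"
  proof
    fix \<omega> assume "\<omega> \<in> {\<omega> \<in> Omega_P. fst \<omega> \<le> C}"
    then have \<omega>: "\<And>i. 0 \<le> snd \<omega> i" "\<And>n. (\<Sum>i<n. snd \<omega> i) \<le> fst \<omega>" "fst \<omega> \<le> C"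
      unfolding Omega_P_sublevel_eq by auto
    have coordinate_le: "snd \<omega> i \<le> fst \<omega>" for i
    proof -
      have "snd \<omega> i \<le> (\<Sum>j<Suc i. snd \<omega> j)"
        using \<omega>(1) by (intro member_le_sum) auto
      then show ?thesis
        using \<omega>(2)[of "Suc i"] by linarith
    qed
    have "snd \<omega> i \<in> {0..C}" for i
      using \<omega>(1)[of i] \<omega>(3) coordinate_le[of i] by simp
    moreover have "fst \<omega> \<in> {0..C}"
      using \<omega>(1)[of 0] \<omega>(3) coordinate_le[of 0] by simp
    ultimately show "\<omega> \<in> {0..C} \<times> (UNIV \<rightarrow>\<^sub>E {0..C})"
      by (simp add: mem_Times_iff PiE_iff)
  qed
  show ?thesis
    using closed_Int_compact[OF closed box] unfolding Int_absorb2[OF sub] .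
qed

definition excess :: "nat \<Rightarrow> real \<Rightarrow> real" where
  "excess n t = min 1 (max 0 (t - real n))"

definition tail_nbhd :: "nat \<Rightarrow> real measure set" where
  "tail_nbhd n = {M \<in> Mfin_pos. (\<integral>x. 1 \<partial>M) \<in> {..<real n}}
                \<inter> {M \<in> Mfin_pos. (\<integral>x. excess n x \<partial>M) \<in> {..<1/2}}"

lemma continuous_on_excess: "continuous_on A (excess n)"
  unfolding excess_def by (intro continuous_intros)

lemma abs_excess_le: "\<bar>excess n t\<bar> \<le> 1"
  by (simp add: excess_def)

lemma openin_tail_nbhd: "openin weak_top (tail_nbhd n)"
proof -
  have "bounded (excess n ` A)" "bounded ((\<lambda>_::real. 1::real) ` A)" for A
    using abs_excess_le by (auto simp: bounded_real)
  then have "openin (topology_generated_by weak_subbasis) (tail_nbhd n)"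
    unfolding tail_nbhd_def
    by (intro openin_Int topology_generated_by_Basis integral_in_weak_subbasis continuous_on_excess)
       auto
  moreover have "tail_nbhd n \<subseteq> Mfin_pos"
    by (auto simp: tail_nbhd_def)
  ultimately show ?thesis
    unfolding weak_top_eq openin_subtopology by blast
qed

lemma tail_nbhd_cover:
  assumes "M \<in> Mfin_pos"
  shows "\<exists>n. M \<in> tail_nbhd n"
proof -
  have sets_M: "sets M = sets pos_borel" and "finite_measure M"
    using assms by (auto simp: Mfin_pos_def)
  interpret finite_measure M by fact
  have measurable: "excess n \<in> borel_measurable M" for n
    unfolding measurable_cong_sets[OF sets_M refl] pos_borel_def
    by (rule borel_measurable_continuous_on_restrict[OF continuous_on_excess])
  have "(\<lambda>n. \<integral>x. excess n x \<partial>M) \<longlonglongrightarrow> (\<integral>x. 0 \<partial>M)"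
  proof (rule integral_dominated_convergence[where w="\<lambda>_. 1", OF _ measurable])
    show "AE x in M. (\<lambda>n. excess n x) \<longlonglongrightarrow> 0"
    proof (rule AE_I2, rule tendsto_eventually)
      fix x :: real
      obtain m :: nat where "x \<le> real m"
        using real_arch_simple by blast
      then show "eventually (\<lambda>n. excess n x = 0) sequentially"
        unfolding eventually_sequentially by (intro exI[of _ m]) (auto simp: excess_def)
    qed
    show "integrable M (\<lambda>_. 1)" "AE x in M. norm (excess n x) \<le> 1" for n
      by (simp_all add: abs_excess_le)
  qed simp
  then have "eventually (\<lambda>n. (\<integral>x. excess n x \<partial>M) < 1/2) sequentially"
    by (intro order_tendstoD(2)) auto
  moreover obtain m :: nat where "(\<integral>x. 1 \<partial>M) < real m"
    using reals_Archimedean2 by blast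
  then have "eventually (\<lambda>n. (\<integral>x. 1 \<partial>M) < real n) sequentially"
    unfolding eventually_sequentially by (intro exI[of _ m]) auto
  ultimately have "eventually (\<lambda>n. M \<in> tail_nbhd n) sequentially"
    by eventually_elim (use assms in \<open>simp add: tail_nbhd_def\<close>)
  then show ?thesis
    using eventually_happens' by (metis sequentially_bot)
qed

text \<open>No \<open>x\<^sub>i\<close> can exceed \<open>n + 1\<close>, since such an atom alone contributes 1 to the integral
  of \<open>excess n\<close>; hence \<open>x\<^sub>i \<le> (n + 1) min(x\<^sub>i, 1)\<close> and \<open>\<gamma>\<close> is at most \<open>n + 1\<close> times the mass.\<close>
lemma gamma_le_if_frak_s_in_tail_nbhd:
  assumes \<omega>: "\<omega> \<in> Omega_P0" and nbhd: "frak_s \<omega> \<in> tail_nbhd n"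
  shows "fst \<omega> \<le> (real n + 1) * real n"
proof -
  have \<omega>P: "\<omega> \<in> Omega_P" and x: "summable (snd \<omega>)" "\<And>i. snd \<omega> i \<ge> 0" "fst \<omega> = (\<Sum>i. snd \<omega> i)"
    using \<omega> by (auto simp: Omega_P0_def Omega_P_def)
  have one: "(\<lambda>_. 1) \<in> borel_measurable pos_borel" "\<And>t. \<bar>1::real\<bar> \<le> 1"
    by simp_all
  have excess: "excess n \<in> borel_measurable pos_borel"
    unfolding pos_borel_def by (rule borel_measurable_continuous_on_restrict[OF continuous_on_excess])
  have mass: "(\<Sum>i. damp (\<lambda>_. 1) (snd \<omega> i)) < real n"
    and tail: "(\<Sum>i. damp (excess n) (snd \<omega> i)) < 1/2"
    using nbhd integral_frak_s[OF \<omega>P one] integral_frak_s[OF \<omega>P excess abs_excess_le]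
    by (auto simp: tail_nbhd_def)
  have "snd \<omega> i \<le> real n + 1" for i
  proof (rule ccontr)
    assume "\<not> snd \<omega> i \<le> real n + 1"
    then have "damp (excess n) (snd \<omega> i) = 1"
      by (simp add: damp_def excess_def)
    moreover have "(\<Sum>j\<in>{i}. damp (excess n) (snd \<omega> j)) \<le> (\<Sum>j. damp (excess n) (snd \<omega> j))"
      by (rule sum_le_suminf[OF summable_damp[OF \<omega>P excess abs_excess_le]])
         (auto simp: damp_def excess_def)
    ultimately show False
      using tail by simp
  qed
  then have "snd \<omega> i \<le> (real n + 1) * damp (\<lambda>_. 1) (snd \<omega> i)" for i
    using x(2)[of i] by (cases "snd \<omega> i > 1") (auto simp: damp_def)
  then have "fst \<omega> \<le> (\<Sum>i. (real n + 1) * damp (\<lambda>_. 1) (snd \<omega> i))"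
    unfolding x(3) using summable_damp[OF \<omega>P one] by (intro suminf_le x(1) summable_mult)
  also have "\<dots> = (real n + 1) * (\<Sum>i. damp (\<lambda>_. 1) (snd \<omega> i))"
    using summable_damp[OF \<omega>P one] by (rule suminf_mult)
  also have "\<dots> \<le> (real n + 1) * real n"
    using mass by (intro mult_left_mono) auto
  finally show ?thesis .
qed

lemma compactin_weak_top_gamma_bounded:
  assumes "compactin weak_top K"
  shows "\<exists>C. \<forall>\<omega>\<in>Omega_P0. frak_s \<omega> \<in> K \<longrightarrow> fst \<omega> \<le> C"
proof -
  have "K \<subseteq> Mfin_pos"
    using compactin_subset_topspace[OF assms] by (simp add: topspace_weak_top)
  then have "K \<subseteq> \<Union>(range tail_nbhd)"
    using tail_nbhd_cover by blast
  then have "\<exists>\<F>. finite \<F> \<and> \<F> \<subseteq> range tail_nbhd \<and> K \<subseteq> \<Union>\<F>"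
    by (rule compactinD[OF assms, rotated]) (auto simp: openin_tail_nbhd)
  then obtain \<F> where \<F>: "finite \<F>" "\<F> \<subseteq> range tail_nbhd" and K: "K \<subseteq> \<Union>\<F>"
    by blast
  obtain J where "finite J" and J: "\<F> = tail_nbhd ` J"
    using finite_subset_image[OF \<F>] by blast
  define m where "m = Max (insert 0 J)"
  have "fst \<omega> \<le> (real m + 1) * real m" if \<omega>: "\<omega> \<in> Omega_P0" and "frak_s \<omega> \<in> K" for \<omega>
  proof -
    obtain n where "n \<in> J" and "frak_s \<omega> \<in> tail_nbhd n"
      using K J \<open>frak_s \<omega> \<in> K\<close> by blast
    then have "fst \<omega> \<le> (real n + 1) * real n"
      using gamma_le_if_frak_s_in_tail_nbhd[OF \<omega>] by blast
    moreover have "(real n + 1) * real n \<le> (real m + 1) * real m"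
      using \<open>finite J\<close> \<open>n \<in> J\<close> by (intro mult_mono) (auto simp: m_def)
    ultimately show ?thesis
      by linarith
  qed
  then show ?thesis
    by blast
qed

lemma emeasure_le_emeasure_distr:
  assumes f: "f \<in> measurable M N" and A: "A \<in> sets N" and B: "B \<in> sets M"
    and Z: "Z \<in> null_sets M" and sub: "B - Z \<subseteq> f -` A"
  shows "emeasure M B \<le> emeasure (distr M N f) A"
proof -
  have preimage: "f -` A \<inter> space M \<in> sets M"
    using f A by (rule measurable_sets)
  have "emeasure M B \<le> emeasure M (Z \<union> (f -` A \<inter> space M))"
    using sub sets.sets_into_space[OF B] Z preimage by (intro emeasure_mono) auto
  also have "\<dots> \<le> emeasure M Z + emeasure M (f -` A \<inter> space M)"
    using Z preimage by (intro emeasure_subadditive) auto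
  also have "\<dots> = emeasure (distr M N f) A"
    using Z f A by (simp add: emeasure_distr null_setsD1)
  finally show ?thesis .
qed

lemma Omega_P_Diff_sublevel_sets:
  "Omega_P - {\<omega> \<in> Omega_P. fst \<omega> \<le> C} \<in> sets (restrict_space borel Omega_P)"
proof -
  have "{\<omega>::real \<times> (nat \<Rightarrow> real). C < fst \<omega>} \<in> sets borel"
    by (intro borel_open open_Collect_less continuous_intros)
  moreover have "Omega_P - {\<omega> \<in> Omega_P. fst \<omega> \<le> C} = Omega_P \<inter> {\<omega>. C < fst \<omega>}"
    by auto
  ultimately show ?thesis
    unfolding sets_restrict_space by blast
qed

lemma emeasure_Omega_P_Diff_sublevel_le:
  assumes sets_Q: "sets Q = sets (restrict_space borel Omega_P)"
    and null: "emeasure Q (Omega_P - Omega_P0) = 0"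
    and A: "A \<in> sets (borel_of weak_top)"
    and C: "\<And>\<omega>. \<omega> \<in> Omega_P0 \<Longrightarrow> frak_s \<omega> \<notin> A \<Longrightarrow> fst \<omega> \<le> C"
  shows "emeasure Q (Omega_P - {\<omega> \<in> Omega_P. fst \<omega> \<le> C}) \<le> emeasure (distr Q (borel_of weak_top) frak_s) A"
proof (rule emeasure_le_emeasure_distr[OF _ A])
  show "frak_s \<in> measurable Q (borel_of weak_top)"
    using frak_s_measurable by (simp add: measurable_cong_sets[OF sets_Q refl])
  have "space (restrict_space borel Omega_P) = Omega_P"
    by (simp add: space_restrict_space)
  then have "Omega_P - Omega_P0 \<in> sets Q"
    using sets.compl_sets[OF Omega_P0_sets] sets_Q by simp
  then show "Omega_P - Omega_P0 \<in> null_sets Q"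
    by (rule null_setsI[OF null])
  show "Omega_P - {\<omega> \<in> Omega_P. fst \<omega> \<le> C} \<in> sets Q"
    using Omega_P_Diff_sublevel_sets sets_Q by simp
  show "Omega_P - {\<omega> \<in> Omega_P. fst \<omega> \<le> C} - (Omega_P - Omega_P0) \<subseteq> frak_s -` A"
    using C by force
qed

theorem mainTheorem7:
  fixes I :: "'i set"
    and P :: "'i \<Rightarrow> real measure measure"
    and Q :: "'i \<Rightarrow> (real \<times> (nat \<Rightarrow> real)) measure"
  assumes P_fin: "\<And>\<alpha>. \<alpha> \<in> I \<Longrightarrow> sets (P \<alpha>) = sets (borel_of weak_top) \<and> finite_measure (P \<alpha>)"
    and P_supp: "\<And>\<alpha>. \<alpha> \<in> I \<Longrightarrow>
        \<exists>N \<in> null_sets (P \<alpha>). topspace weak_top - frak_s ` Omega_P \<subseteq> N"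
    and P_tight: "tight_family weak_top I P"
    and Q_sets: "\<And>\<alpha>. \<alpha> \<in> I \<Longrightarrow> sets (Q \<alpha>) = sets (restrict_space borel Omega_P)"
    and Q_push: "\<And>\<alpha>. \<alpha> \<in> I \<Longrightarrow> distr (Q \<alpha>) (borel_of weak_top) frak_s = P \<alpha>"
    and Q_P0: "\<And>\<alpha>. \<alpha> \<in> I \<Longrightarrow> emeasure (Q \<alpha>) (Omega_P - Omega_P0) = 0"
  shows "tight_family (subtopology euclidean Omega_P) I Q"
  unfolding tight_family_def
proof (intro allI impI)
  fix \<epsilon> :: real assume "\<epsilon> > 0"
  then obtain K where K: "compactin weak_top K" and P_small: "\<forall>\<alpha>\<in>I. topspace weak_top - K \<in> sets (P \<alpha>)
      \<and> emeasure (P \<alpha>) (topspace weak_top - K) < ennreal \<epsilon>"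
    using P_tight unfolding tight_family_def by blast
  obtain C where C: "\<forall>\<omega>\<in>Omega_P0. frak_s \<omega> \<in> K \<longrightarrow> fst \<omega> \<le> C"
    using compactin_weak_top_gamma_bounded[OF K] by blast
  have "frak_s \<omega> \<notin> topspace weak_top - K \<Longrightarrow> fst \<omega> \<le> C" if "\<omega> \<in> Omega_P0" for \<omega>
    using that C frak_s_in_Mfin_pos[of \<omega>] Omega_P0_subset by (auto simp: topspace_weak_top)
  then have "emeasure (Q \<alpha>) (Omega_P - {\<omega> \<in> Omega_P. fst \<omega> \<le> C}) < ennreal \<epsilon>" if "\<alpha> \<in> I" for \<alpha>
    using emeasure_Omega_P_Diff_sublevel_le[OF Q_sets Q_P0, of \<alpha> "topspace weak_top - K" C]
      that P_small P_fin Q_push by fastforce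
  moreover have "compactin (top_of_set Omega_P) {\<omega> \<in> Omega_P. fst \<omega> \<le> C}"
    using compact_Omega_P_sublevel by (simp add: compactin_subtopology)
  ultimately show "\<exists>K. compactin (top_of_set Omega_P) K \<and> (\<forall>\<alpha>\<in>I.
      topspace (top_of_set Omega_P) - K \<in> sets (Q \<alpha>)
      \<and> emeasure (Q \<alpha>) (topspace (top_of_set Omega_P) - K) < ennreal \<epsilon>)"
    using Omega_P_Diff_sublevel_sets Q_sets by auto
qed

end
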